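(* For each $\epsilon>0$ there exists $N$ such that for every $n\geq N$ and every connected finite simple graph $G$ of order $n$ (with at least one edge), $$\mathrm{es}_{\Delta}(G)\leq\left(\frac{5}{9}+\epsilon\right)n.$$
   Context: $\mathrm{es}_{\Delta}(G)$ is the minimum number of edges of $G$ whose removal results in a subgraph with maximum degree $\Delta(G)-1$. All graphs are finite, simple, and have at least one edge. *)

theory Defs
  imports Complex_Main
begin

definition simple_graph :: "'a set \<Rightarrow> 'a set set \<Rightarrow> bool" where
  "simple_graph V E \<longleftrightarrow> finite V \<and>
     (\<forall>e\<in>E. \<exists>u v. u \<in> V \<and> v \<in> V \<and> u \<noteq> v \<and> e = {u, v})"

definition degree :: "'a set set \<Rightarrow> 'a \<Rightarrow> nat" where
  "degree E v = card {e \<in> E. v \<in> e}"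

definition max_degree :: "'a set \<Rightarrow> 'a set set \<Rightarrow> nat" where
  "max_degree V E = Max (degree E ` V)"

definition adj :: "'a set set \<Rightarrow> 'a \<Rightarrow> 'a \<Rightarrow> bool" where
  "adj E u v \<longleftrightarrow> {u, v} \<in> E"

definition connected_graph :: "'a set \<Rightarrow> 'a set set \<Rightarrow> bool" where
  "connected_graph V E \<longleftrightarrow> V \<noteq> {} \<and>
     (\<forall>u\<in>V. \<forall>v\<in>V. (adj E)\<^sup>*\<^sup>* u v)"

definition es_Delta :: "'a set \<Rightarrow> 'a set set \<Rightarrow> nat" where
  "es_Delta V E = Min {card F | F. F \<subseteq> E \<and> max_degree V (E - F) = max_degree V E - 1}"

end

theory Submission
  imports Defs "HOL-Library.Disjoint_Sets"
begin

text \<open>Let \<open>S\<close> be the set of vertices of maximum degree \<open>\<Delta>\<close>. Deleting an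
  inclusion-minimal edge cover of \<open>S\<close> lowers the maximum degree by exactly one, and \<open>S\<close>
  has an edge cover with \<open>|S| - \<nu>(S)\<close> edges (a maximum matching of \<open>G[S]\<close> plus one
  edge at each unmatched vertex), so \<open>es\<^sub>\<Delta>(G) \<le> |S| - \<nu>(S)\<close>. The Tutte--Berge
  formula gives \<open>X \<subseteq> S\<close> with \<open>|S| - 2\<nu>(S) \<le> odd(G[S - X]) - |X|\<close>, so it remains
  to bound the odd components of \<open>G[S - X]\<close>. All their vertices have degree \<open>\<Delta>\<close> in
  \<open>G\<close>, hence \<open>\<Delta>|C| = 2e(C) + |\<partial>C|\<close>, and a small odd component must send many
  edges out of \<open>S - X\<close>. Charging each component to its boundary edges with weights
  depending on \<open>\<Delta>\<close>, and bounding the boundary edges by the degrees outside \<open>S - X\<close>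
  and the number of components by connectivity, gives
  \<open>9 odd(G[S - X]) \<le> 9|X| + |S| + 10|V - S| + 9\<close>. Together: \<open>18 es\<^sub>\<Delta>(G) \<le> 10n + 9\<close>.\<close>

lemma minimal_cover_exists:
  assumes "finite F" "A \<subseteq> \<Union>F"
  shows "\<exists>F'\<subseteq>F. A \<subseteq> \<Union>F' \<and> (\<forall>e\<in>F'. \<not> A \<subseteq> \<Union>(F' - {e}))"
  using assms
proof (induction F rule: finite_psubset_induct)
  case (psubset F)
  show ?case
  proof (cases "\<exists>e\<in>F. A \<subseteq> \<Union>(F - {e})")
    case True
    then obtain e where e: "e \<in> F" "A \<subseteq> \<Union>(F - {e})"
      by blast
    then have "F - {e} \<subset> F"
      by auto
    from psubset.IH[OF this e(2)] show ?thesis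
      by (meson Diff_subset subset_trans)
  next
    case False
    then show ?thesis
      using psubset.prems by (intro exI[of _ F]) simp
  qed
qed

lemma rtranclp_exits_set:
  assumes "r\<^sup>*\<^sup>* a b" "a \<in> B" "b \<notin> B"
  shows "\<exists>x y. x \<in> B \<and> y \<notin> B \<and> r x y"
  using assms by (induction rule: rtranclp_induct) auto

locale sgraph =
  fixes V :: "'a set" and E :: "'a set set"
  assumes simple: "simple_graph V E"
begin

lemma finite_V: "finite V"
  using simple by (simp add: simple_graph_def)

lemma edgeE:
  assumes "e \<in> E"
  obtains u v where "u \<in> V" "v \<in> V" "u \<noteq> v" "e = {u, v}"
  using assms simple by (auto simp: simple_graph_def)

lemma edge_subset_V: "e \<in> E \<Longrightarrow> e \<subseteq> V"
  by (auto elim: edgeE)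

lemma finite_E: "finite E"
  by (rule finite_subset[of _ "Pow V"]) (use edge_subset_V finite_V in auto)

lemma card_edge: "e \<in> E \<Longrightarrow> card e = 2"
  by (auto elim: edgeE)

lemma finite_edge: "e \<in> E \<Longrightarrow> finite e"
  by (auto elim: edgeE)

lemma edge_atE:
  assumes "e \<in> E" "x \<in> e"
  obtains y where "y \<noteq> x" "e = {x, y}"
proof -
  obtain u v where uv: "u \<noteq> v" "e = {u, v}"
    using assms(1) by (rule edgeE)
  show ?thesis
  proof (cases "x = u")
    case True
    then show ?thesis
      using that[of v] uv by simp
  next
    case False
    then show ?thesis
      using that[of u] uv assms(2) by (simp add: insert_commute)
  qed
qed

subsection \<open>Components of induced subgraphs\<close>

definition adj_in :: "'a set \<Rightarrow> 'a \<Rightarrow> 'a \<Rightarrow> bool" where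
  "adj_in W u v \<longleftrightarrow> u \<in> W \<and> v \<in> W \<and> {u, v} \<in> E"

definition component :: "'a set \<Rightarrow> 'a \<Rightarrow> 'a set" where
  "component W v = {u. (adj_in W)\<^sup>*\<^sup>* v u}"

definition components :: "'a set \<Rightarrow> 'a set set" where
  "components W = component W ` W"

definition odd_components :: "'a set \<Rightarrow> nat" where
  "odd_components W = card {C \<in> components W. odd (card C)}"

lemma symp_adj_in: "symp (adj_in W)"
  by (auto simp: symp_def adj_in_def insert_commute)

lemma reachable_in_mem: "(adj_in W)\<^sup>*\<^sup>* u v \<Longrightarrow> u \<in> W \<Longrightarrow> v \<in> W"
  by (induction rule: rtranclp_induct) (auto simp: adj_in_def)

lemma component_subset: "v \<in> W \<Longrightarrow> component W v \<subseteq> W"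
  unfolding component_def using reachable_in_mem by blast

lemma in_component_self: "v \<in> component W v"
  by (simp add: component_def)

lemma component_eq:
  assumes "u \<in> component W v"
  shows "component W u = component W v"
proof -
  have vu: "(adj_in W)\<^sup>*\<^sup>* v u" and uv: "(adj_in W)\<^sup>*\<^sup>* u v"
    using assms sympD[OF symp_rtranclp[OF symp_adj_in]] by (auto simp: component_def)
  show ?thesis
    unfolding component_def using rtranclp_trans[OF vu] rtranclp_trans[OF uv] by blast
qed

lemma component_closed:
  assumes "C \<in> components W" "a \<in> C" "b \<in> W" "{a, b} \<in> E"
  shows "b \<in> C"
proof -
  obtain v where v: "v \<in> W" "C = component W v"
    using assms(1) by (auto simp: components_def)
  then have "adj_in W a b"
    using assms component_subset by (auto simp: adj_in_def)
  then show ?thesis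
    using assms(2) v(2) by (auto simp: component_def intro: rtranclp.rtrancl_into_rtrancl)
qed

lemma partition_on_components: "partition_on W (components W)"
proof (rule partition_onI)
  show "\<Union> (components W) = W"
    using component_subset in_component_self by (auto simp: components_def)
  show "{} \<notin> components W"
    using in_component_self by (auto simp: components_def)
  show "disjnt C C'" if "C \<in> components W" "C' \<in> components W" "C \<noteq> C'" for C C'
  proof (rule ccontr)
    assume "\<not> disjnt C C'"
    then obtain z where "z \<in> C" "z \<in> C'"
      by (auto simp: disjnt_def)
    then have "C = component W z" "C' = component W z"
      using that(1,2) component_eq by (auto simp: components_def)
    then show False
      using that(3) by simp
  qed
qed

subsection \<open>Matchings and the Tutte--Berge formula\<close>

definition matching :: "'a set \<Rightarrow> 'a set set \<Rightarrow> bool" where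
  "matching W M \<longleftrightarrow> M \<subseteq> E \<and> (\<forall>e\<in>M. e \<subseteq> W) \<and> disjoint M"

definition matching_number :: "'a set \<Rightarrow> nat" where
  "matching_number W = Max (card ` {M. matching W M})"

definition maximum_matching :: "'a set \<Rightarrow> 'a set set \<Rightarrow> bool" where
  "maximum_matching W M \<longleftrightarrow> matching W M \<and> card M = matching_number W"

lemma finite_matching: "matching W M \<Longrightarrow> finite M"
  using finite_E by (auto simp: matching_def intro: finite_subset)

lemma card_le_matching_number: "matching W M \<Longrightarrow> card M \<le> matching_number W"
proof -
  have "finite {M. matching W M}"
    using finite_E by (auto simp: matching_def intro: finite_subset[of _ "Pow E"])
  then show "matching W M \<Longrightarrow> card M \<le> matching_number W"
    by (auto simp: matching_number_def)
qed

lemma maximum_matching_exists: "\<exists>M. maximum_matching W M"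
proof -
  have "finite {M. matching W M}" "matching W {}"
    using finite_E by (auto simp: matching_def intro: finite_subset[of _ "Pow E"])
  then have "matching_number W \<in> card ` {M. matching W M}"
    unfolding matching_number_def by (intro Max_in) auto
  then show ?thesis
    by (auto simp: maximum_matching_def)
qed

lemma matching_subset: "matching W M \<Longrightarrow> M' \<subseteq> M \<Longrightarrow> matching W M'"
  by (auto simp: matching_def pairwise_subset)

lemma matching_edge_unique:
  "matching W M \<Longrightarrow> e \<in> M \<Longrightarrow> f \<in> M \<Longrightarrow> x \<in> e \<Longrightarrow> x \<in> f \<Longrightarrow> e = f"
  unfolding matching_def disjoint_def by blast

lemma card_Union_matching:
  assumes "matching W M"
  shows "card (\<Union>M) = 2 * card M"
proof -
  have "card (\<Union>M) = (\<Sum>e\<in>M. card e)"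
    using assms finite_edge by (intro card_Union_disjoint) (auto simp: matching_def)
  also have "\<dots> = (\<Sum>e\<in>M. 2)"
    using assms card_edge by (intro sum.cong) (auto simp: matching_def)
  finally show ?thesis
    by simp
qed

lemma finite_Union_matching: "matching W M \<Longrightarrow> finite (\<Union>M)"
  by (rule finite_Union[OF finite_matching]) (auto simp: matching_def intro: finite_edge)

lemma matching_insert:
  assumes "matching W M" "e \<in> E" "e \<subseteq> W" "e \<inter> \<Union>M = {}"
  shows "matching W (insert e M)"
  using assms by (auto simp: matching_def pairwise_insert disjnt_def)

lemma maximum_matching_meets_edge:
  assumes M: "maximum_matching W M" and e: "e \<in> E" "e \<subseteq> W"
  shows "e \<inter> \<Union>M \<noteq> {}"
proof
  assume free: "e \<inter> \<Union>M = {}"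
  then have augmented: "matching W (insert e M)"
    using M e matching_insert by (simp add: maximum_matching_def)
  have "e \<noteq> {}"
    using card_edge[OF e(1)] by auto
  then have "e \<notin> M"
    using free by blast
  then have "Suc (card M) \<le> matching_number W"
    using card_le_matching_number[OF augmented] finite_matching[OF augmented] by simp
  then show False
    using M by (simp add: maximum_matching_def)
qed

lemma matching_swap:
  assumes N: "matching W N" and f: "f \<in> N" and e: "e \<in> E" "e \<subseteq> W" "e \<notin> N"
    and free: "e \<inter> \<Union>(N - {f}) = {}"
  shows "matching W (insert e (N - {f}))" "card (insert e (N - {f})) = card N"
proof -
  have "matching W (N - {f})"
    using N by (rule matching_subset) blast
  then show "matching W (insert e (N - {f}))"
    using e free by (intro matching_insert)
  show "card (insert e (N - {f})) = card N"
    using e(3) finite_matching[OF N] card.remove[OF finite_matching[OF N] f] by simp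
qed

lemma maximum_matching_exchange:
  assumes M: "maximum_matching W M" and N: "maximum_matching W N"
    and x: "x \<in> \<Union>M" "x \<notin> \<Union>N"
  obtains N' y where "maximum_matching W N'" "\<Union>N' = insert x (\<Union>N - {y})"
    "card (N' - M) < card (N - M)"
proof -
  have mM: "matching W M" and mN: "matching W N"
    using M N by (auto simp: maximum_matching_def)
  obtain e where e: "e \<in> M" "x \<in> e"
    using x by blast
  have eE: "e \<in> E" "e \<subseteq> W"
    using e mM by (auto simp: matching_def)
  obtain x' where e_eq: "x' \<noteq> x" "e = {x, x'}"
    using edge_atE[OF eE(1) e(2)] .
  have "x' \<in> \<Union>N"
    using maximum_matching_meets_edge[OF N eE] x(2) e_eq(2) by auto
  then obtain f where f: "f \<in> N" "x' \<in> f"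
    by blast
  obtain y where f_eq: "y \<noteq> x'" "f = {x', y}"
    using edge_atE[OF _ f(2)] f(1) mN by (auto simp: matching_def)
  define N' where "N' = insert e (N - {f})"
  have e_notin: "e \<notin> N"
    using e(2) x(2) by blast
  have "e \<inter> \<Union>(N - {f}) = {}"
    using x(2) e_eq(2) matching_edge_unique[OF mN _ f(1) _ f(2)] by blast
  then have "maximum_matching W N'"
    using matching_swap[OF mN f(1) eE e_notin] N by (simp add: N'_def maximum_matching_def)
  moreover have "\<Union>N' = insert x (\<Union>N - {y})"
  proof -
    have "\<Union>(N - {f}) = \<Union>N - f"
      using f(1) matching_edge_unique[OF mN _ f(1)] by blast
    then show ?thesis
      using e_eq f_eq \<open>x' \<in> \<Union>N\<close> by (auto simp: N'_def)
  qed
  moreover have "card (N' - M) < card (N - M)"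
  proof -
    have "f \<notin> M"
      using matching_edge_unique[OF mM e(1) _ _ f(2)] e_eq(2) e_notin f(1) by auto
    then have "card ((N - M) - {f}) < card (N - M)"
      using f(1) finite_matching[OF mN] by (intro card_Diff1_less) auto
    moreover have "N' - M = (N - M) - {f}"
      using e(1) by (auto simp: N'_def)
    ultimately show ?thesis
      by simp
  qed
  ultimately show ?thesis
    using that by blast
qed

lemma maximum_matchings_cover_vertex:
  assumes M: "maximum_matching W M" and uv: "u \<notin> \<Union>M" "v \<notin> \<Union>M" "u \<noteq> v"
    and forced: "\<And>N. maximum_matching W N \<Longrightarrow> w \<notin> \<Union>N \<Longrightarrow> u \<in> \<Union>N \<and> v \<in> \<Union>N"
  shows "maximum_matching W N \<Longrightarrow> w \<in> \<Union>N"
proof (induction "card (N - M)" arbitrary: N rule: less_induct)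
  case less
  show ?case
  proof (rule ccontr)
    assume w: "w \<notin> \<Union>N"
    have fin: "finite (\<Union>M)" "finite (\<Union>N)"
      using M less.prems finite_Union_matching by (auto simp: maximum_matching_def)
    have "card (\<Union>M) = card (\<Union>N)"
      using M less.prems card_Union_matching unfolding maximum_matching_def by metis
    then have "card (\<Union>M - \<Union>N) = card (\<Union>N - \<Union>M)"
      using fin by (simp add: card_Diff_subset_Int Int_commute)
    moreover have "card {u, v} \<le> card (\<Union>N - \<Union>M)"
      using forced[OF less.prems w] uv fin by (intro card_mono) auto
    ultimately have "\<not> \<Union>M - \<Union>N \<subseteq> {w}"
      using uv(3) card_mono[of "{w}" "\<Union>M - \<Union>N"] by auto
    then obtain x where x: "x \<in> \<Union>M" "x \<notin> \<Union>N" "x \<noteq> w"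
      by blast
    obtain N' y where N': "maximum_matching W N'" "\<Union>N' = insert x (\<Union>N - {y})"
      "card (N' - M) < card (N - M)"
      using maximum_matching_exchange[OF M less.prems x(1,2)] .
    have "w \<in> \<Union>N'"
      using less.hyps[OF N'(3) N'(1)] .
    then show False
      using N'(2) w x(3) by auto
  qed
qed

lemma gallai_unmatched_not_reachable:
  assumes missed: "\<And>w. w \<in> W \<Longrightarrow> \<exists>N. maximum_matching W N \<and> w \<notin> \<Union>N"
    and path: "(adj_in W)\<^sup>*\<^sup>* u v"
  shows "maximum_matching W M \<Longrightarrow> u \<notin> \<Union>M \<Longrightarrow> v \<notin> \<Union>M \<Longrightarrow> u = v"
  using path
proof (induction arbitrary: M rule: converse_rtranclp_induct)
  case base
  then show ?case
    by simp
next
  case (step u w)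
  have uw: "{u, w} \<in> E" "{u, w} \<subseteq> W" "w \<in> W"
    using step.hyps(1) by (auto simp: adj_in_def)
  show "u = v"
  proof (rule ccontr)
    assume "u \<noteq> v"
    have "w \<noteq> v"
      using maximum_matching_meets_edge[OF step.prems(1) uw(1,2)] step.prems(2,3) by blast
    then have "u \<in> \<Union>N \<and> v \<in> \<Union>N" if "maximum_matching W N" "w \<notin> \<Union>N" for N
      using maximum_matching_meets_edge[OF that(1) uw(1,2)] step.IH[OF that] that(2) by blast
    then have "w \<in> \<Union>N" if "maximum_matching W N" for N
      using maximum_matchings_cover_vertex[OF step.prems \<open>u \<noteq> v\<close>] that by blast
    then show False
      using missed[OF uw(3)] by blast
  qed
qed

lemma matching_number_remove_vertex:
  assumes v: "v \<in> W" and covered: "\<And>M. maximum_matching W M \<Longrightarrow> v \<in> \<Union>M"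
  shows "matching_number W = Suc (matching_number (W - {v}))"
proof -
  obtain M where M: "maximum_matching W M"
    using maximum_matching_exists by blast
  then obtain e where e: "e \<in> M" "v \<in> e"
    using covered by blast
  have mM: "matching W M"
    using M by (simp add: maximum_matching_def)
  have "matching W (M - {e})"
    using mM by (rule matching_subset) blast
  moreover have "g \<subseteq> W - {v}" if "g \<in> M - {e}" for g
    using that mM matching_edge_unique[OF mM _ e(1) _ e(2)] by (auto simp: matching_def)
  ultimately have "matching (W - {v}) (M - {e})"
    by (auto simp: matching_def)
  then have "card M - 1 \<le> matching_number (W - {v})"
    using card_le_matching_number e(1) finite_matching[OF mM] by (metis card_Diff_singleton)
  moreover obtain M' where M': "maximum_matching (W - {v}) M'"
    using maximum_matching_exists by blast
  then have "matching W M'" "v \<notin> \<Union>M'"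
    by (auto simp: maximum_matching_def matching_def)
  then have "\<not> maximum_matching W M'"
    using covered by blast
  then have "card M' < matching_number W"
    using card_le_matching_number[OF \<open>matching W M'\<close>] \<open>matching W M'\<close>
    by (simp add: maximum_matching_def)
  ultimately show ?thesis
    using M M' e by (auto simp: maximum_matching_def)
qed

lemma even_card_matched_in_component:
  assumes M: "matching W M" and C: "C \<in> components W"
  shows "even (card (C \<inter> \<Union>M))"
proof -
  have "C \<inter> \<Union>M = \<Union>{e \<in> M. e \<subseteq> C}"
  proof (intro equalityI subsetI)
    fix z assume z: "z \<in> C \<inter> \<Union>M"
    then obtain e where e: "e \<in> M" "z \<in> e"
      by blast
    have "e \<in> E" "e \<subseteq> W"
      using e(1) M by (auto simp: matching_def)
    then obtain z' where "e = {z, z'}" "z' \<in> W"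
      using edge_atE e(2) by (metis insert_subset)
    then have "e \<subseteq> C"
      using component_closed[OF C] z \<open>e \<in> E\<close> by auto
    then show "z \<in> \<Union>{e \<in> M. e \<subseteq> C}"
      using e by blast
  qed blast
  moreover have "matching W {e \<in> M. e \<subseteq> C}"
    using M by (rule matching_subset) blast
  ultimately show ?thesis
    using card_Union_matching by simp
qed

lemma card_unmatched_le_odd_components:
  assumes W: "finite W"
    and missed: "\<And>w. w \<in> W \<Longrightarrow> \<exists>N. maximum_matching W N \<and> w \<notin> \<Union>N"
    and M: "maximum_matching W M"
  shows "card (W - \<Union>M) \<le> odd_components W"
proof -
  have same: "u' = u" if "u \<in> W - \<Union>M" "u' \<in> component W u" "u' \<notin> \<Union>M" for u u'
  proof -
    have "(adj_in W)\<^sup>*\<^sup>* u u'"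
      using that(2) by (simp add: component_def)
    then show ?thesis
      using gallai_unmatched_not_reachable[OF missed _ M] that(1,3) by blast
  qed
  have "odd (card (component W u))" if u: "u \<in> W - \<Union>M" for u
  proof -
    have C: "component W u \<in> components W"
      using u by (auto simp: components_def)
    have "component W u - \<Union>M = {u}"
      using same[OF u] u in_component_self[of u W] by auto
    moreover have "finite (component W u)"
      using component_subset[of u W] u W by (auto intro: finite_subset)
    ultimately have "card (component W u) = card (component W u \<inter> \<Union>M) + 1"
      using card_Int_Diff[of "component W u" "\<Union>M"] by simp
    then show ?thesis
      using even_card_matched_in_component[OF _ C] M by (simp add: maximum_matching_def)
  qed
  then have "component W ` (W - \<Union>M) \<subseteq> {C \<in> components W. odd (card C)}"
    by (auto simp: components_def)
  moreover have "inj_on (component W) (W - \<Union>M)"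
  proof (rule inj_onI)
    fix u u' assume u: "u \<in> W - \<Union>M" "u' \<in> W - \<Union>M" "component W u = component W u'"
    then have "u' \<in> component W u"
      using in_component_self[of u' W] by simp
    then show "u = u'"
      using same[OF u(1)] u(2) by auto
  qed
  moreover have "finite (components W)"
    using W by (simp add: components_def)
  ultimately show ?thesis
    unfolding odd_components_def by (intro card_inj_on_le) auto
qed

theorem tutte_berge:
  "finite W \<Longrightarrow> \<exists>X\<subseteq>W. card W + card X \<le> 2 * matching_number W + odd_components (W - X)"
proof (induction "card W" arbitrary: W rule: less_induct)
  case less
  show ?case
  proof (cases "\<exists>v\<in>W. \<forall>M. maximum_matching W M \<longrightarrow> v \<in> \<Union>M")
    case True
    then obtain v where v: "v \<in> W" "\<And>M. maximum_matching W M \<Longrightarrow> v \<in> \<Union>M"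
      by blast
    have "card (W - {v}) < card W"
      using less.prems v(1) by (rule card_Diff1_less)
    then obtain X where X: "X \<subseteq> W - {v}"
      "card (W - {v}) + card X \<le> 2 * matching_number (W - {v}) + odd_components (W - {v} - X)"
      using less.hyps less.prems by blast
    have "card W = Suc (card (W - {v}))"
      using card.remove[OF less.prems v(1)] .
    moreover have "card (insert v X) = Suc (card X)"
      using X(1) finite_subset[OF X(1)] less.prems by (simp add: subset_Diff_insert)
    moreover have "W - insert v X = W - {v} - X"
      by blast
    moreover have "matching_number W = Suc (matching_number (W - {v}))"
      using matching_number_remove_vertex v by blast
    ultimately show ?thesis
      using X v(1) by (intro exI[of _ "insert v X"]) auto
  next
    case False
    then have missed: "\<And>w. w \<in> W \<Longrightarrow> \<exists>N. maximum_matching W N \<and> w \<notin> \<Union>N"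
      by blast
    obtain M where M: "maximum_matching W M"
      using maximum_matching_exists by blast
    then have "\<Union>M \<subseteq> W" "card (\<Union>M) = 2 * matching_number W"
      using card_Union_matching by (auto simp: maximum_matching_def matching_def)
    then have "card W = card (W - \<Union>M) + 2 * matching_number W"
      using less.prems by (metis card_Diff_subset card_mono finite_subset le_add_diff_inverse2)
    then show ?thesis
      using card_unmatched_le_odd_components[OF less.prems missed M] by (intro exI[of _ "{}"]) auto
  qed
qed

subsection \<open>Edge covers of the maximum-degree vertices\<close>

definition major_vertices :: "'a set" where
  "major_vertices = {v \<in> V. degree E v = max_degree V E}"

lemma major_vertices_subset: "major_vertices \<subseteq> V"
  by (auto simp: major_vertices_def)

lemma finite_major_subset: "Y \<subseteq> major_vertices \<Longrightarrow> finite Y"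
  using finite_subset[OF _ finite_V] major_vertices_subset by blast

lemma degree_le_max_degree: "v \<in> V \<Longrightarrow> degree E v \<le> max_degree V E"
  unfolding max_degree_def using finite_V by (intro Max_ge) auto

lemma degree_Diff:
  assumes "F \<subseteq> E"
  shows "degree (E - F) v = degree E v - card {e \<in> F. v \<in> e}"
proof -
  have "{e \<in> E - F. v \<in> e} = {e \<in> E. v \<in> e} - {e \<in> F. v \<in> e}"
    by blast
  moreover have "{e \<in> F. v \<in> e} \<subseteq> {e \<in> E. v \<in> e}" "finite {e \<in> F. v \<in> e}"
    using assms finite_E by (auto intro: finite_subset)
  ultimately show ?thesis
    by (simp add: degree_def card_Diff_subset)
qed

lemma max_degree_pos:
  assumes "E \<noteq> {}"
  shows "0 < max_degree V E"
proof -
  obtain e where e: "e \<in> E"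
    using assms by blast
  then obtain u v where u: "u \<in> V" "e = {u, v}"
    by (rule edgeE)
  then have "e \<in> {e' \<in> E. u \<in> e'}"
    using e by simp
  then have "0 < degree E u"
    using finite_E by (auto simp: degree_def card_gt_0_iff)
  then show ?thesis
    using degree_le_max_degree[OF u(1)] by simp
qed

lemma major_vertices_nonempty:
  assumes "E \<noteq> {}"
  shows "major_vertices \<noteq> {}"
proof -
  have "V \<noteq> {}"
    using assms by (auto elim: edgeE)
  then have "max_degree V E \<in> degree E ` V"
    using finite_V by (simp add: max_degree_def)
  then show ?thesis
    by (auto simp: major_vertices_def)
qed

lemma max_degree_remove_minimal_cover:
  assumes F: "F \<subseteq> E" "major_vertices \<subseteq> \<Union>F"
    and minimal: "\<And>e. e \<in> F \<Longrightarrow> \<not> major_vertices \<subseteq> \<Union>(F - {e})"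
    and E: "E \<noteq> {}"
  shows "max_degree V (E - F) = max_degree V E - 1"
  unfolding max_degree_def[of V "E - F"]
proof (rule Max_eqI)
  show "finite (degree (E - F) ` V)"
    using finite_V by simp
  show "d \<le> max_degree V E - 1" if d: "d \<in> degree (E - F) ` V" for d
  proof -
    obtain v where v: "v \<in> V" "d = degree (E - F) v"
      using d by blast
    show ?thesis
    proof (cases "v \<in> major_vertices")
      case True
      then have "{e \<in> F. v \<in> e} \<noteq> {}"
        using F(2) by blast
      moreover have "finite {e \<in> F. v \<in> e}"
        using finite_subset[OF F(1) finite_E] by simp
      ultimately have "0 < card {e \<in> F. v \<in> e}"
        by (simp add: card_gt_0_iff)
      then show ?thesis
        using True v degree_Diff[OF F(1)] by (simp add: major_vertices_def)
    next
      case False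
      then have "degree E v < max_degree V E"
        using v(1) degree_le_max_degree[OF v(1)] by (simp add: major_vertices_def)
      then show ?thesis
        using v degree_Diff[OF F(1)] by simp
    qed
  qed
  obtain e where e: "e \<in> F"
    using F(2) major_vertices_nonempty[OF E] by blast
  then obtain v where v: "v \<in> major_vertices" "v \<notin> \<Union>(F - {e})"
    using minimal by blast
  then have "{e' \<in> F. v \<in> e'} = {e}"
    using F(2) e by blast
  then have "degree (E - F) v = max_degree V E - 1"
    using v(1) degree_Diff[OF F(1)] by (simp add: major_vertices_def)
  moreover have "v \<in> V"
    using v(1) by (simp add: major_vertices_def)
  ultimately show "max_degree V E - 1 \<in> degree (E - F) ` V"
    by (metis image_eqI)
qed

lemma es_Delta_le_cover:
  assumes "F \<subseteq> E" "major_vertices \<subseteq> \<Union>F" "E \<noteq> {}"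
  shows "es_Delta V E \<le> card F"
proof -
  obtain F' where F': "F' \<subseteq> F" "major_vertices \<subseteq> \<Union>F'"
    "\<And>e. e \<in> F' \<Longrightarrow> \<not> major_vertices \<subseteq> \<Union>(F' - {e})"
    using minimal_cover_exists[of F major_vertices] assms(1,2) finite_subset[OF assms(1) finite_E]
    by blast
  then have "max_degree V (E - F') = max_degree V E - 1"
    using assms by (intro max_degree_remove_minimal_cover) auto
  moreover have "finite {card F | F. F \<subseteq> E \<and> max_degree V (E - F) = max_degree V E - 1}"
    using finite_E by simp
  ultimately have "es_Delta V E \<le> card F'"
    unfolding es_Delta_def using F'(1) assms(1) by (intro Min_le) auto
  also have "\<dots> \<le> card F"
    using F'(1) finite_subset[OF assms(1) finite_E] by (rule card_mono[rotated])
  finally show ?thesis .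
qed

lemma cover_from_matching:
  assumes W: "W \<subseteq> V" and nonisolated: "\<And>v. v \<in> W \<Longrightarrow> \<exists>e\<in>E. v \<in> e"
  shows "\<exists>F\<subseteq>E. W \<subseteq> \<Union>F \<and> card F + matching_number W \<le> card W"
proof -
  obtain M where M: "maximum_matching W M"
    using maximum_matching_exists by blast
  define g where "g v = (SOME e. e \<in> E \<and> v \<in> e)" for v
  have g: "g v \<in> E" "v \<in> g v" if "v \<in> W" for v
    using someI_ex[OF nonisolated[OF that, unfolded Bex_def]] by (auto simp: g_def)
  define F where "F = M \<union> g ` (W - \<Union>M)"
  have M_sub: "M \<subseteq> E" "\<Union>M \<subseteq> W" and cM: "card M = matching_number W"
    using M by (auto simp: maximum_matching_def matching_def)
  have finW: "finite W"
    using W finite_V finite_subset by blast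
  have "card F \<le> card M + card (W - \<Union>M)"
    unfolding F_def by (rule order.trans[OF card_Un_le add_left_mono[OF card_image_le]]) (use finW in simp)
  also have "card (W - \<Union>M) = card W - card (\<Union>M)"
    using M_sub(2) finW by (simp add: card_Diff_subset finite_subset)
  finally have "card F + matching_number W \<le> card W"
    using cM card_mono[OF finW M_sub(2)] card_Union_matching M by (simp add: maximum_matching_def)
  moreover have "F \<subseteq> E" "W \<subseteq> \<Union>F"
    using M_sub g by (auto simp: F_def)
  ultimately show ?thesis
    by blast
qed

lemma es_Delta_le_major_matching:
  assumes "E \<noteq> {}"
  shows "es_Delta V E + matching_number major_vertices \<le> card major_vertices"
proof -
  have "\<exists>e\<in>E. v \<in> e" if "v \<in> major_vertices" for v
  proof -
    have "0 < degree E v"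
      using that max_degree_pos[OF assms] by (simp add: major_vertices_def)
    then show ?thesis
      by (auto simp: degree_def card_gt_0_iff)
  qed
  then obtain F where "F \<subseteq> E" "major_vertices \<subseteq> \<Union>F"
    "card F + matching_number major_vertices \<le> card major_vertices"
    using cover_from_matching[of major_vertices] by (auto simp: major_vertices_def)
  then show ?thesis
    using es_Delta_le_cover[of F] assms by simp
qed

subsection \<open>Boundaries and crossing edges\<close>

definition edges_in :: "'a set \<Rightarrow> 'a set set" where
  "edges_in A = {e \<in> E. e \<subseteq> A}"

definition boundary :: "'a set \<Rightarrow> 'a set set" where
  "boundary A = {e \<in> E. e \<inter> A \<noteq> {} \<and> \<not> e \<subseteq> A}"

definition crossing_edges :: "'a set set \<Rightarrow> 'a set set" where
  "crossing_edges P = {e \<in> E. \<forall>B\<in>P. \<not> e \<subseteq> B}"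

lemma finite_boundary: "finite (boundary A)"
  using finite_E by (simp add: boundary_def)

lemma boundary_edgeE:
  assumes "e \<in> boundary A"
  obtains x y where "x \<in> A" "y \<notin> A" "e = {x, y}"
proof -
  obtain x where x: "x \<in> e" "x \<in> A"
    using assms by (auto simp: boundary_def)
  obtain y where "e = {x, y}"
    using edge_atE[OF _ x(1)] assms by (auto simp: boundary_def)
  then show ?thesis
    using that x(2) assms by (auto simp: boundary_def)
qed

lemma boundary_complement: "boundary (V - A) = boundary A"
  using edge_subset_V by (auto simp: boundary_def)

lemma boundary_nonempty:
  assumes conn: "connected_graph V E" and A: "A \<subseteq> V" "A \<noteq> {}" "\<not> V \<subseteq> A"
  shows "boundary A \<noteq> {}"
proof -
  obtain a b where ab: "a \<in> A" "b \<in> V" "b \<notin> A"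
    using A by blast
  then have "(adj E)\<^sup>*\<^sup>* a b"
    using conn A(1) by (auto simp: connected_graph_def)
  then obtain x y where "x \<in> A" "y \<notin> A" "{x, y} \<in> E"
    using rtranclp_exits_set ab by (metis adj_def)
  then have "{x, y} \<in> boundary A"
    by (auto simp: boundary_def)
  then show ?thesis
    by blast
qed

lemma finite_crossing_edges: "finite (crossing_edges P)"
  using finite_E by (simp add: crossing_edges_def)

lemma crossing_edge_leaving_blocks:
  assumes conn: "connected_graph V E" and P: "partition_on V P"
    and Q: "Q \<subseteq> P" "Q \<noteq> {}" "Q \<noteq> P"
  obtains B e where "B \<in> P" "B \<notin> Q" "e \<in> crossing_edges P" "e \<subseteq> \<Union>(insert B Q)" "\<not> e \<subseteq> \<Union>Q"
proof -
  have blocks: "B \<subseteq> V" "B \<noteq> {}" if "B \<in> P" for B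
    using that P by (auto simp: partition_on_def)
  have same_block: "B = B'" if "B \<in> P" "B' \<in> P" "x \<in> B" "x \<in> B'" for B B' x
    using that P by (auto simp: partition_on_def disjoint_def)
  obtain B' where B': "B' \<in> P" "B' \<notin> Q"
    using Q(1,3) by blast
  have UQ: "\<Union>Q \<subseteq> V" "\<Union>Q \<noteq> {}"
    using Q(1,2) blocks by blast+
  have "\<not> V \<subseteq> \<Union>Q"
  proof
    assume "V \<subseteq> \<Union>Q"
    then obtain x B where "x \<in> B'" "x \<in> B" "B \<in> Q"
      using blocks[OF B'(1)] by blast
    then show False
      using same_block[OF B'(1)] Q(1) B'(2) by blast
  qed
  then obtain e where e: "e \<in> boundary (\<Union>Q)"
    using boundary_nonempty[OF conn UQ] by blast
  then obtain x y where xy: "x \<in> \<Union>Q" "y \<notin> \<Union>Q" "e = {x, y}"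
    by (rule boundary_edgeE)
  have "y \<in> V"
    using e xy(3) edge_subset_V by (auto simp: boundary_def)
  then obtain B where B: "B \<in> P" "y \<in> B"
    using P by (auto simp: partition_on_def)
  have "\<not> e \<subseteq> B''" if "B'' \<in> P" for B''
  proof
    assume "e \<subseteq> B''"
    moreover obtain B0 where "B0 \<in> Q" "x \<in> B0"
      using xy(1) by blast
    ultimately have "B'' = B0"
      using same_block[OF that] Q(1) xy(3) by blast
    then show False
      using \<open>e \<subseteq> B''\<close> \<open>B0 \<in> Q\<close> xy(2,3) by blast
  qed
  then have "e \<in> crossing_edges P"
    using e by (auto simp: crossing_edges_def boundary_def)
  moreover have "B \<notin> Q" "e \<subseteq> \<Union>(insert B Q)" "\<not> e \<subseteq> \<Union>Q"
    using B xy by auto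
  ultimately show ?thesis
    using that B(1) by blast
qed

lemma card_partition_le_crossing:
  assumes conn: "connected_graph V E" and P: "partition_on V P"
  shows "card P \<le> card (crossing_edges P) + 1"
proof -
  have finP: "finite P"
    using finite_elements[OF finite_V P] .
  have greedy: "\<exists>Q F. Q \<subseteq> P \<and> card Q = Suc k \<and> F \<subseteq> crossing_edges P \<and> card F = k
      \<and> (\<forall>e\<in>F. e \<subseteq> \<Union>Q)" if "k < card P" for k
    using that
  proof (induction k)
    case 0
    then obtain B where "B \<in> P"
      by (auto simp: card_gt_0_iff)
    then show ?case
      by (intro exI[of _ "{B}"] exI[of _ "{}"]) auto
  next
    case (Suc k)
    then obtain Q F where Q: "Q \<subseteq> P" "card Q = Suc k" and F: "F \<subseteq> crossing_edges P"
      "card F = k" "\<forall>e\<in>F. e \<subseteq> \<Union>Q"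
      using Suc_lessD by blast
    have "Q \<noteq> {}" "Q \<noteq> P"
      using Q(2) Suc.prems by auto
    then obtain B e where B: "B \<in> P" "B \<notin> Q" and e: "e \<in> crossing_edges P"
      "e \<subseteq> \<Union>(insert B Q)" "\<not> e \<subseteq> \<Union>Q"
      using crossing_edge_leaving_blocks[OF conn P Q(1)] by blast
    have "finite Q" "finite F"
      using finite_subset[OF Q(1) finP] finite_subset[OF F(1) finite_crossing_edges] .
    moreover have "e \<notin> F"
      using F(3) e(3) by blast
    ultimately show ?case
      using Q F B e by (intro exI[of _ "insert B Q"] exI[of _ "insert e F"]) auto
  qed
  show ?thesis
  proof (cases "card P")
    case (Suc k)
    then obtain F where "F \<subseteq> crossing_edges P" "card F = k"
      using greedy[of k] by auto
    then have "k \<le> card (crossing_edges P)"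
      using card_mono[OF finite_crossing_edges] by blast
    then show ?thesis
      using Suc by simp
  qed simp
qed

lemma finite_edges_in: "finite (edges_in A)"
  using finite_E by (simp add: edges_in_def)

lemma card_Int_edge:
  assumes "e \<in> E"
  shows "card (e \<inter> A) = (if e \<subseteq> A then 2 else if e \<in> boundary A then 1 else 0)"
proof -
  obtain u v where "u \<noteq> v" "e = {u, v}"
    using assms by (rule edgeE)
  then show ?thesis
    using assms by (cases "u \<in> A"; cases "v \<in> A") (auto simp: boundary_def Int_insert_left)
qed

lemma sum_degree:
  assumes "finite A"
  shows "(\<Sum>v\<in>A. degree E v) = 2 * card (edges_in A) + card (boundary A)"
proof -
  have "(\<Sum>v\<in>A. degree E v) = (\<Sum>v\<in>A. \<Sum>e\<in>E. if v \<in> e then 1 else 0)"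
    unfolding degree_def using finite_E by (simp add: sum.inter_filter[symmetric])
  also have "\<dots> = (\<Sum>e\<in>E. \<Sum>v\<in>A. if v \<in> e then 1 else 0)"
    by (rule sum.swap)
  also have "\<dots> = (\<Sum>e\<in>E. card {v \<in> A. v \<in> e})"
    using assms by (simp add: sum.inter_filter[symmetric])
  also have "\<dots> = (\<Sum>e\<in>E. card (e \<inter> A))"
    by (simp add: Collect_conj_eq Int_commute)
  also have "\<dots> = (\<Sum>e\<in>E. 2 * (if e \<in> edges_in A then 1 else 0) + (if e \<in> boundary A then 1 else 0))"
    by (intro sum.cong) (auto simp: card_Int_edge edges_in_def boundary_def)
  also have "\<dots> = 2 * card (edges_in A) + card (boundary A)"
    using finite_E by (simp add: sum.distrib sum_distrib_left[symmetric] sum.inter_filter[symmetric]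
        edges_in_def boundary_def)
  finally show ?thesis .
qed

lemma card_edges_in_le: "finite A \<Longrightarrow> 2 * card (edges_in A) \<le> card A * (card A - 1)"
proof -
  assume A: "finite A"
  have "card (edges_in A) \<le> card {B. B \<subseteq> A \<and> card B = 2}"
  proof (rule card_mono)
    show "finite {B. B \<subseteq> A \<and> card B = 2}"
      using A by simp
    show "edges_in A \<subseteq> {B. B \<subseteq> A \<and> card B = 2}"
      by (auto simp: edges_in_def card_edge)
  qed
  then have "card (edges_in A) \<le> card A choose 2"
    using n_subsets[OF A] by simp
  then show ?thesis
    by (simp add: choose_two)
qed

lemma boundary_component_Int:
  assumes "C \<in> components W" "e \<in> boundary C"
  shows "e \<inter> W \<subseteq> C"
proof -
  obtain x y where "x \<in> C" "y \<notin> C" "e = {x, y}"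
    using assms(2) by (rule boundary_edgeE)
  moreover have "e \<in> E"
    using assms(2) by (simp add: boundary_def)
  ultimately show ?thesis
    using component_closed[OF assms(1)] by auto
qed

lemma components_subset: "C \<in> components W \<Longrightarrow> C \<subseteq> W"
  using partition_on_components[of W] by (auto simp: partition_on_def)

lemma sum_card_boundary_components:
  assumes "finite W"
  shows "(\<Sum>C\<in>components W. card (boundary C)) \<le> card (boundary W)"
proof -
  have disj: "boundary C \<inter> boundary C' = {}"
    if "C \<in> components W" "C' \<in> components W" "C \<noteq> C'" for C C'
  proof (intro equalityI subsetI)
    fix e assume e: "e \<in> boundary C \<inter> boundary C'"
    have "C \<inter> C' = {}"
      using partition_on_components[of W] that by (auto simp: partition_on_def disjoint_def)
    then have "e \<inter> W = {}"
      using e boundary_component_Int[OF that(1)] boundary_component_Int[OF that(2)] by blast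
    moreover have "e \<inter> C \<noteq> {}"
      using e by (simp add: boundary_def)
    ultimately show "e \<in> {}"
      using components_subset[OF that(1)] by blast
  qed simp
  have "(\<Sum>C\<in>components W. card (boundary C)) = card (\<Union>C\<in>components W. boundary C)"
    using assms disj finite_boundary by (intro card_UN_disjoint[symmetric]) (auto simp: components_def)
  also have "\<dots> \<le> card (boundary W)"
  proof (intro card_mono finite_boundary subsetI)
    fix e assume "e \<in> (\<Union>C\<in>components W. boundary C)"
    then obtain C where C: "C \<in> components W" "e \<in> boundary C"
      by blast
    then have "e \<inter> W \<subseteq> C" "C \<subseteq> W"
      using boundary_component_Int components_subset by auto
    then show "e \<in> boundary W"
      using C(2) by (auto simp: boundary_def)
  qed
  finally show ?thesis .
qed

definition component_partition :: "'a set \<Rightarrow> 'a set set" where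
  "component_partition Y = (\<lambda>v. {v}) ` (V - Y) \<union> components Y"

lemma partition_on_component_partition:
  assumes "Y \<subseteq> V"
  shows "partition_on V (component_partition Y)"
proof -
  have "disjoint (component_partition Y)"
    unfolding component_partition_def using partition_on_components[of Y]
    by (intro disjoint_union) (auto simp: partition_on_def disjoint_def)
  moreover have "\<Union>(component_partition Y) = V" "{} \<notin> component_partition Y"
    using partition_on_components[of Y] assms by (auto simp: component_partition_def partition_on_def)
  ultimately show ?thesis
    by (simp add: partition_on_def)
qed

lemma card_component_partition:
  assumes "Y \<subseteq> V"
  shows "card (component_partition Y) = card (V - Y) + card (components Y)"
proof -
  have "(\<lambda>v. {v}) ` (V - Y) \<inter> components Y = {}"
  proof (intro equalityI subsetI)
    fix B assume "B \<in> (\<lambda>v. {v}) ` (V - Y) \<inter> components Y"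
    then obtain v where "B = {v}" "v \<notin> Y" "B \<in> components Y"
      by blast
    then show "B \<in> {}"
      using components_subset by blast
  qed simp
  moreover have "finite (components Y)"
    using assms finite_V by (simp add: components_def finite_subset)
  ultimately show ?thesis
    using finite_V by (simp add: component_partition_def card_Un_disjoint card_image)
qed

lemma crossing_component_partition:
  "crossing_edges (component_partition Y) \<subseteq> edges_in (V - Y) \<union> boundary Y"
proof
  fix e assume e: "e \<in> crossing_edges (component_partition Y)"
  then have eE: "e \<in> E"
    by (simp add: crossing_edges_def)
  show "e \<in> edges_in (V - Y) \<union> boundary Y"
  proof (cases "e \<inter> Y = {}")
    case True
    then show ?thesis
      using eE edge_subset_V by (auto simp: edges_in_def)
  next
    case False
    then obtain x where x: "x \<in> e" "x \<in> Y"
      by blast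
    obtain y where y: "e = {x, y}"
      using edge_atE[OF eE x(1)] by blast
    have C: "component Y x \<in> components Y"
      using x(2) by (simp add: components_def)
    then have "y \<notin> component Y x"
      using e y in_component_self[of x Y]
      by (auto simp: crossing_edges_def component_partition_def)
    then have "y \<notin> Y"
      using component_closed[OF C in_component_self _ ] eE y by blast
    then show ?thesis
      using eE x y by (auto simp: boundary_def)
  qed
qed

lemma card_components_le:
  assumes conn: "connected_graph V E" and Y: "Y \<subseteq> V"
  shows "card (V - Y) + card (components Y) \<le> card (edges_in (V - Y)) + card (boundary Y) + 1"
proof -
  have "card (crossing_edges (component_partition Y)) \<le> card (edges_in (V - Y) \<union> boundary Y)"
    using crossing_component_partition by (rule card_mono[rotated]) (simp add: finite_edges_in finite_boundary)
  also have "\<dots> \<le> card (edges_in (V - Y)) + card (boundary Y)"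
    by (rule card_Un_le)
  finally show ?thesis
    using card_partition_le_crossing[OF conn partition_on_component_partition[OF Y]]
      card_component_partition[OF Y] by linarith
qed

end

subsection \<open>Discharging\<close>

text \<open>A component with \<open>c\<close> vertices of degree \<open>d\<close>, \<open>i\<close> inner and \<open>e\<close> boundary edges has
  \<open>d c = 2 i + e\<close>; for odd \<open>c < 9\<close> this forces \<open>e \<ge> max 1 (c (d - c + 1))\<close> with
  \<open>e \<equiv> c d (mod 2)\<close>. The weights are chosen so that such an \<open>e\<close> always pays for the charge
  \<open>9 - c\<close>, while the edge weight \<open>a\<close> and the component weight \<open>b\<close> keep \<open>(a + b) d - b \<le> 10\<close>.\<close>

definition boundary_edge_weight :: "nat \<Rightarrow> real" where
  "boundary_edge_weight d = (if d = 1 then 8 else if d = 2 then 4 else if d \<le> 4 then 2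
     else if d = 5 then 3/2 else 8 / real d)"

definition component_weight :: "nat \<Rightarrow> real" where
  "component_weight d = (if d = 3 then 2 else if d = 5 then 1/2 else 0)"

lemma weights_nonneg: "0 \<le> boundary_edge_weight d" "0 \<le> component_weight d" "component_weight d \<le> 2"
  by (auto simp: boundary_edge_weight_def component_weight_def)

lemma weights_bound:
  assumes "1 \<le> d"
  shows "(boundary_edge_weight d + component_weight d) * d - component_weight d \<le> 10"
proof (cases "d \<le> 5")
  case True
  then have "d = 1 \<or> d = 2 \<or> d = 3 \<or> d = 4 \<or> d = 5"
    using assms by auto
  then show ?thesis
    by (auto simp: boundary_edge_weight_def component_weight_def)
next
  case False
  then show ?thesis
    by (simp add: boundary_edge_weight_def component_weight_def)
qed

lemma charge_le_weights:
  fixes d c e i :: nat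
  assumes d: "1 \<le> d" and c: "1 \<le> c" and e: "1 \<le> e"
    and degrees: "d * c = 2 * i + e" and inner: "2 * i \<le> c * (c - 1)"
  shows "(if odd c then 9 else 0) \<le> real c + boundary_edge_weight d * e + component_weight d"
proof (cases "odd c \<and> c < 9")
  case False
  have "0 \<le> boundary_edge_weight d * e" "0 \<le> component_weight d"
    using weights_nonneg[of d] by simp_all
  moreover have "(if odd c then 9 else 0) \<le> real c"
    using False by auto
  ultimately show ?thesis
    by linarith
next
  case True
  then have c_cases: "c = 1 \<or> c = 3 \<or> c = 5 \<or> c = 7"
    using c by presburger
  have "d * c \<le> c * (c - 1) + e"
    using degrees inner by linarith
  then have "real (d * c) \<le> real (c * (c - 1) + e)"
    by (simp only: of_nat_le_iff)
  then have e_lower: "real d * real c \<le> real c * (real c - 1) + real e"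
    using c by (simp add: of_nat_diff)
  show ?thesis
  proof (cases "d \<le> 6")
    case True
    have "even (d * c) \<Longrightarrow> 2 \<le> e"
      using degrees e by presburger
    moreover have "d = 1 \<or> d = 2 \<or> d = 3 \<or> d = 4 \<or> d = 5 \<or> d = 6"
      using d True by auto
    ultimately show ?thesis
      using c_cases e e_lower by (elim disjE) (auto simp: boundary_edge_weight_def component_weight_def)
  next
    case False
    have "real d \<le> real e"
      using c_cases e_lower False by auto
    then have "8 \<le> 8 / real d * real e"
      using False by (simp add: field_simps)
    moreover have "1 \<le> real c"
      using c by simp
    ultimately show ?thesis
      using False True by (simp add: boundary_edge_weight_def component_weight_def)
  qed
qed

lemma weighted_charges_le:
  fixes d x t k i s b :: nat
  assumes d: "1 \<le> d" and s: "s \<le> b"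
    and degrees: "2 * i + b \<le> d * x + (d - 1) * t" and parts: "x + t + k \<le> i + b + 1"
  shows "boundary_edge_weight d * s + component_weight d * k \<le> 10 * x + 10 * t + 2"
proof -
  define \<alpha> \<beta> where "\<alpha> = boundary_edge_weight d" and "\<beta> = component_weight d"
  have w: "0 \<le> \<alpha>" "0 \<le> \<beta>" "\<beta> \<le> 2" "(\<alpha> + \<beta>) * d - \<beta> \<le> 10"
    unfolding \<alpha>_def \<beta>_def using weights_nonneg weights_bound[OF d] by auto
  have "real (2 * i + b) \<le> real (d * x + (d - 1) * t)"
    using degrees by (simp only: of_nat_le_iff)
  then have degrees': "2 * real i + real b \<le> real d * x + (real d - 1) * t"
    using d by (simp add: of_nat_diff)
  have "real (x + t + k) \<le> real (i + b + 1)"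
    using parts by (simp only: of_nat_le_iff)
  then have "real k \<le> real i + real b + 1 - real x - real t"
    by simp
  then have "\<alpha> * s + \<beta> * k \<le> \<alpha> * b + \<beta> * (real i + real b + 1 - real x - real t)"
    using w s by (intro add_mono mult_left_mono) auto
  also have "\<dots> \<le> (\<alpha> + \<beta>) * (2 * i + b) + \<beta> - \<beta> * x - \<beta> * t"
    using w by (simp add: algebra_simps)
  also have "\<dots> \<le> (\<alpha> + \<beta>) * (d * x + (real d - 1) * t) + \<beta> - \<beta> * x - \<beta> * t"
    using w degrees' by (simp add: mult_left_mono)
  also have "\<dots> = ((\<alpha> + \<beta>) * d - \<beta>) * x + ((\<alpha> + \<beta>) * (real d - 1) - \<beta>) * t + \<beta>"
    by (simp add: algebra_simps)
  also have "\<dots> \<le> 10 * real x + 10 * real t + 2"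
  proof -
    have "(\<alpha> + \<beta>) * (real d - 1) \<le> (\<alpha> + \<beta>) * d"
      using w by (intro mult_left_mono) auto
    then have "(\<alpha> + \<beta>) * (real d - 1) - \<beta> \<le> 10"
      using w by linarith
    then show ?thesis
      using w by (intro add_mono mult_right_mono) auto
  qed
  finally show ?thesis
    by (simp add: \<alpha>_def \<beta>_def)
qed

context sgraph
begin

lemma degree_sum_outside_le:
  assumes X: "X \<subseteq> major_vertices"
  shows "2 * card (edges_in (V - (major_vertices - X))) + card (boundary (major_vertices - X))
    \<le> max_degree V E * card X + (max_degree V E - 1) * card (V - major_vertices)"
proof -
  let ?\<Delta> = "max_degree V E" and ?T = "V - major_vertices"
  have split: "V - (major_vertices - X) = X \<union> ?T" "X \<inter> ?T = {}"
    using X major_vertices_subset by auto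
  have finX: "finite X"
    using finite_subset[OF subset_trans[OF X major_vertices_subset] finite_V] .
  have "(\<Sum>v\<in>V - (major_vertices - X). degree E v)
      = 2 * card (edges_in (V - (major_vertices - X))) + card (boundary (major_vertices - X))"
    using sum_degree[of "V - (major_vertices - X)"] finite_V
    unfolding boundary_complement by simp
  moreover have "(\<Sum>v\<in>V - (major_vertices - X). degree E v)
      = (\<Sum>v\<in>X. degree E v) + (\<Sum>v\<in>?T. degree E v)"
    unfolding split(1) using finX finite_V split(2) by (simp add: sum.union_disjoint)
  moreover have "(\<Sum>v\<in>X. degree E v) = ?\<Delta> * card X"
  proof -
    have "(\<Sum>v\<in>X. degree E v) = (\<Sum>v\<in>X. ?\<Delta>)"
      using X by (intro sum.cong) (auto simp: major_vertices_def)
    then show ?thesis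
      by simp
  qed
  moreover have "(\<Sum>v\<in>?T. degree E v) \<le> (?\<Delta> - 1) * card ?T"
  proof -
    have "degree E v \<le> ?\<Delta> - 1" if "v \<in> ?T" for v
      using that degree_le_max_degree[of v] by (auto simp: major_vertices_def)
    then have "(\<Sum>v\<in>?T. degree E v) \<le> of_nat (card ?T) * (?\<Delta> - 1)"
      by (rule sum_bounded_above)
    then show ?thesis
      by (simp add: mult.commute)
  qed
  ultimately show ?thesis
    by linarith
qed

lemma component_charge_le_weights:
  assumes E: "E \<noteq> {}" and Y: "Y \<subseteq> major_vertices" and C: "C \<in> components Y"
    and bC: "boundary C \<noteq> {}"
  shows "(if odd (card C) then 9 else 0) \<le> real (card C)
    + boundary_edge_weight (max_degree V E) * card (boundary C) + component_weight (max_degree V E)"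
proof -
  have CY: "C \<subseteq> Y" "C \<noteq> {}"
    using components_subset[OF C] partition_onD3[OF partition_on_components] C by auto
  have finC: "finite C"
    using finite_subset[OF subset_trans[OF CY(1) subset_trans[OF Y major_vertices_subset]] finite_V] .
  have "max_degree V E * card C = (\<Sum>v\<in>C. max_degree V E)"
    by simp
  also have "\<dots> = (\<Sum>v\<in>C. degree E v)"
    using CY Y by (intro sum.cong) (auto simp: major_vertices_def)
  also have "\<dots> = 2 * card (edges_in C) + card (boundary C)"
    using sum_degree[OF finC] .
  finally have degrees: "max_degree V E * card C = 2 * card (edges_in C) + card (boundary C)" .
  have "1 \<le> max_degree V E"
    using max_degree_pos[OF E] by simp
  moreover have "1 \<le> card C"
    using CY(2) finC by (simp add: Suc_le_eq card_gt_0_iff)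
  moreover have "1 \<le> card (boundary C)"
    using bC finite_boundary by (simp add: Suc_le_eq card_gt_0_iff)
  ultimately show ?thesis
    using degrees card_edges_in_le[OF finC] by (rule charge_le_weights)
qed

lemma sum_charges_le_weights:
  assumes conn: "connected_graph V E" and E: "E \<noteq> {}"
    and Y: "Y \<subseteq> major_vertices" and outside: "\<not> V \<subseteq> Y"
  shows "9 * real (odd_components Y) \<le> real (card Y)
    + boundary_edge_weight (max_degree V E) * (\<Sum>C\<in>components Y. card (boundary C))
    + component_weight (max_degree V E) * card (components Y)"
proof -
  let ?K = "components Y"
  have finY: "finite Y"
    using finite_major_subset[OF Y] .
  then have finK: "finite ?K"
    by (simp add: components_def)
  have "boundary C \<noteq> {}" if "C \<in> ?K" for C
  proof (rule boundary_nonempty[OF conn])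
    show "C \<subseteq> V" "C \<noteq> {}" "\<not> V \<subseteq> C"
      using that components_subset[OF that] partition_on_components[of Y] Y outside
        major_vertices_subset by (auto simp: partition_on_def)
  qed
  then have "(\<Sum>C\<in>?K. if odd (card C) then 9 else 0)
      \<le> (\<Sum>C\<in>?K. real (card C) + boundary_edge_weight (max_degree V E) * card (boundary C)
          + component_weight (max_degree V E))"
    using component_charge_le_weights[OF E Y] by (intro sum_mono) auto
  also have "\<dots> = real (\<Sum>C\<in>?K. card C)
      + boundary_edge_weight (max_degree V E) * real (\<Sum>C\<in>?K. card (boundary C))
      + component_weight (max_degree V E) * card ?K"
    by (simp add: sum.distrib sum_distrib_left mult.commute)
  also have "(\<Sum>C\<in>?K. card C) = card Y"
    using components_subset finite_subset[OF _ finY]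
    by (intro product_partition[OF partition_on_components, symmetric]) simp
  also have "(\<Sum>C\<in>?K. if odd (card C) then 9 else 0) = 9 * real (odd_components Y)"
    using finK by (simp add: odd_components_def sum.inter_filter[symmetric])
  finally show ?thesis .
qed

lemma component_weights_le:
  assumes E: "E \<noteq> {}" and X: "X \<subseteq> major_vertices" and conn: "connected_graph V E"
  shows "boundary_edge_weight (max_degree V E)
        * (\<Sum>C\<in>components (major_vertices - X). card (boundary C))
      + component_weight (max_degree V E) * card (components (major_vertices - X))
    \<le> 10 * card X + 10 * card (V - major_vertices) + 2"
proof -
  let ?\<Delta> = "max_degree V E" and ?Y = "major_vertices - X"
  have "?Y \<subseteq> V" "finite ?Y"
    using major_vertices_subset finite_major_subset[of ?Y] by auto
  have "V - ?Y = X \<union> (V - major_vertices)" "X \<inter> (V - major_vertices) = {}"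
    using X major_vertices_subset by auto
  then have "card (V - ?Y) = card X + card (V - major_vertices)"
    using finite_major_subset[OF X] finite_V by (simp add: card_Un_disjoint)
  then have "card X + card (V - major_vertices) + card (components ?Y)
      \<le> card (edges_in (V - ?Y)) + card (boundary ?Y) + 1"
    using card_components_le[OF conn \<open>?Y \<subseteq> V\<close>] by simp
  moreover have "1 \<le> ?\<Delta>"
    using max_degree_pos[OF E] by simp
  ultimately show ?thesis
    using degree_sum_outside_le[OF X] sum_card_boundary_components[OF \<open>finite ?Y\<close>]
    by (intro weighted_charges_le) auto
qed

lemma odd_components_major_le:
  assumes conn: "connected_graph V E" and E: "E \<noteq> {}" and X: "X \<subseteq> major_vertices"
  shows "9 * odd_components (major_vertices - X)
    \<le> 9 * card X + card major_vertices + 10 * card (V - major_vertices) + 9"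
proof -
  define Y where "Y = major_vertices - X"
  have Y: "Y \<subseteq> major_vertices" "Y \<subseteq> V" "finite Y"
    using major_vertices_subset finite_major_subset[of Y] by (auto simp: Y_def)
  show ?thesis
  proof (cases "V \<subseteq> Y")
    case True
    then have "boundary Y = {}"
      using edge_subset_V by (auto simp: boundary_def)
    moreover have "edges_in (V - Y) = {}"
      using True by (auto simp: edges_in_def elim: edgeE)
    moreover have "odd_components Y \<le> card (components Y)"
      using Y(3) by (auto simp: odd_components_def components_def intro: card_mono)
    ultimately have "odd_components Y \<le> 1"
      using card_components_le[OF conn Y(2)] by simp
    then show ?thesis
      by (simp add: Y_def)
  next
    case False
    have "9 * real (odd_components Y)
        \<le> real (card Y) + 10 * card X + 10 * card (V - major_vertices) + 2"
      using sum_charges_le_weights[OF conn E Y(1) False] component_weights_le[OF E X conn]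
      by (simp add: Y_def)
    moreover have "card Y + card X = card major_vertices"
      using X finite_major_subset[OF X] card_mono[OF finite_major_subset[of major_vertices] X]
      by (simp add: Y_def card_Diff_subset)
    ultimately show ?thesis
      by (simp add: Y_def)
  qed
qed

theorem es_Delta_le:
  assumes conn: "connected_graph V E" and E: "E \<noteq> {}"
  shows "18 * es_Delta V E \<le> 10 * card V + 9"
proof -
  have finS: "finite major_vertices"
    using finite_major_subset by simp
  obtain X where X: "X \<subseteq> major_vertices" and tutte:
    "card major_vertices + card X \<le> 2 * matching_number major_vertices + odd_components (major_vertices - X)"
    using tutte_berge[OF finS] by blast
  have "card (V - major_vertices) = card V - card major_vertices"
    using major_vertices_subset finS by (simp add: card_Diff_subset)
  moreover have "card major_vertices \<le> card V"
    using major_vertices_subset finite_V by (simp add: card_mono)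
  ultimately show ?thesis
    using es_Delta_le_major_matching[OF E] tutte odd_components_major_le[OF conn E X] by linarith
qed

end

theorem corollary4p5:
  "\<forall>\<epsilon>::real. \<epsilon> > 0 \<longrightarrow> (\<exists>N::nat. \<forall>n \<ge> N. \<forall>(V::nat set) E.
     simple_graph V E \<and> connected_graph V E \<and> card V = n \<and> E \<noteq> {} \<longrightarrow>
     real (es_Delta V E) \<le> (5/9 + \<epsilon>) * real n)"
proof -
  have "real (es_Delta V E) \<le> (5/9 + \<epsilon>) * real n"
    if "\<epsilon> > 0" "nat \<lceil>1 / \<epsilon>\<rceil> \<le> n" "simple_graph V E" "connected_graph V E" "card V = n" "E \<noteq> {}"
    for \<epsilon> :: real and n and V :: "nat set" and E
  proof -
    interpret sgraph V E
      using that(3) by unfold_locales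
    have "18 * es_Delta V E \<le> 10 * n + 9"
      using es_Delta_le[OF that(4,6)] that(5) by simp
    then have "real (18 * es_Delta V E) \<le> real (10 * n + 9)"
      by (simp only: of_nat_le_iff)
    moreover have "1 \<le> \<epsilon> * real n"
      using that(1,2) by (simp add: field_simps)
    ultimately show ?thesis
      by (simp add: algebra_simps)
  qed
  then show ?thesis
    by blast
qed

end
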